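(* Let $(M,d)$ be a complete pointed metric space with at least three distinct points. Then $G\cap(-G)=\Phi\,\mathrm{Lip}_0(M)$.
   Context: $\mathrm{Lip}_0(M)$: Lipschitz $f:M\to\mathbb{R}$ with $f(0)=0$ ($0$ the base point). $\widetilde{M}=\{(x,y)\in M\times M:x\ne y\}$, $\beta\widetilde{M}$ its Stone–Čech compactification. $\Phi:\mathrm{Lip}_0(M)\to C(\beta\widetilde{M})$ maps $f$ to the continuous extension of $(x,y)\mapsto(f(x)-f(y))/d(x,y)$. $G$ is the set of $g\in C(\beta\widetilde{M})$ such that $d(x,y)g(x,y)\le d(x,u)g(x,u)+d(u,y)g(u,y)$ for all distinct $x,u,y\in M$. *)

theory Defs
  imports "HOL-Analysis.Analysis"
begin

(* M is the whole type 'a (a complete metric space); the base point is z. *)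

definition Lip0 :: "'a::metric_space \<Rightarrow> ('a \<Rightarrow> real) set" where
  "Lip0 z = {f. f z = 0 \<and> (\<exists>L. L-lipschitz_on UNIV f)}"

definition Mtilde :: "('a \<times> 'a) set" where
  "Mtilde = {(x, y). x \<noteq> y}"

(* (K, e) is a Stone-Cech compactification of the topological space X:
   K compact Hausdorff, e an embedding with dense image, and every bounded
   continuous real function on X extends continuously to K
   (the standard characterisation of beta X). *)
definition stone_cech :: "'b topology \<Rightarrow> 'k topology \<Rightarrow> ('b \<Rightarrow> 'k) \<Rightarrow> bool" where
  "stone_cech X K e \<longleftrightarrow>
     compact_space K \<and> Hausdorff_space K \<and> embedding_map X K e \<and>
     K closure_of (e ` topspace X) = topspace K \<and>
     (\<forall>h. continuous_map X euclideanreal h \<and> bounded (h ` topspace X) \<longrightarrow>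
        (\<exists>g. continuous_map K euclideanreal g \<and> (\<forall>x\<in>topspace X. g (e x) = h x)))"

definition CK :: "'k topology \<Rightarrow> ('k \<Rightarrow> real) set" where
  "CK K = {g. continuous_map K euclideanreal g \<and> (\<forall>p. p \<notin> topspace K \<longrightarrow> g p = 0)}"

definition Phi :: "'k topology \<Rightarrow> ('a \<times> 'a \<Rightarrow> 'k) \<Rightarrow> ('a::metric_space \<Rightarrow> real) \<Rightarrow> ('k \<Rightarrow> real)" where
  "Phi K e f = (THE h. h \<in> CK K \<and>
      (\<forall>x y. x \<noteq> y \<longrightarrow> h (e (x, y)) = (f x - f y) / dist x y))"

definition GG :: "'k topology \<Rightarrow> ('a::metric_space \<times> 'a \<Rightarrow> 'k) \<Rightarrow> ('k \<Rightarrow> real) set" where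
  "GG K e = {g \<in> CK K. \<forall>x u y. x \<noteq> u \<and> u \<noteq> y \<and> x \<noteq> y \<longrightarrow>
      dist x y * g (e (x, y)) \<le> dist x u * g (e (x, u)) + dist u y * g (e (u, y))}"

end

theory Submission
  imports Defs
begin

text \<open>If both \<open>g\<close> and \<open>-g\<close> lie in \<open>G\<close>, the triangle condition holds with equality, so
  \<open>H x y = d(x,y) g(x,y)\<close> is additive along any three distinct points. With a third point at
  hand this forces antisymmetry of \<open>H\<close>, and then \<open>H x y = f x - f y\<close> for \<open>f x = H x 0\<close>;
  since \<open>g\<close> is bounded on the compact space \<open>\<beta>M~\<close>, \<open>f\<close> is Lipschitz and \<open>g = \<Phi> f\<close>.
  Conversely the difference quotient of a Lipschitz \<open>f\<close> is bounded and continuous on \<open>M~\<close>,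
  hence extends to \<open>\<beta>M~\<close>, and \<open>\<Phi> f\<close> satisfies the triangle condition with equality,
  as does \<open>\<Phi> (-f) = - \<Phi> f\<close>.\<close>

lemma stone_cech_image_subset_topspace:
  assumes "stone_cech X K e"
  shows "e ` topspace X \<subseteq> topspace K"
proof -
  have "homeomorphic_map X (subtopology K (e ` topspace X)) e"
    using assms by (simp add: stone_cech_def embedding_map_def)
  then have "e ` topspace X = topspace K \<inter> e ` topspace X"
    by (metis homeomorphic_imp_surjective_map topspace_subtopology)
  then show ?thesis
    by blast
qed

lemma stone_cech_CK_eqI:
  assumes sc: "stone_cech X K e" and "h1 \<in> CK K" and "h2 \<in> CK K"
    and agree: "\<And>x. x \<in> topspace X \<Longrightarrow> h1 (e x) = h2 (e x)"
  shows "h1 = h2"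
proof
  fix p
  show "h1 p = h2 p"
  proof (cases "p \<in> topspace K")
    case False
    then show ?thesis using assms(2,3) by (simp add: CK_def)
  next
    case True
    have "continuous_map K euclideanreal h1" "continuous_map K euclideanreal h2"
      using assms(2,3) by (auto simp: CK_def)
    then have "closedin K {q \<in> topspace K. h1 q = h2 q}"
      by (intro closedin_continuous_maps_eq) auto
    moreover have "e ` topspace X \<subseteq> {q \<in> topspace K. h1 q = h2 q}"
      using stone_cech_image_subset_topspace[OF sc] agree by auto
    ultimately have "K closure_of (e ` topspace X) \<subseteq> {q \<in> topspace K. h1 q = h2 q}"
      by (rule closure_of_minimal[rotated])
    with True sc show ?thesis by (auto simp: stone_cech_def)
  qed
qed

lemma stone_cech_extension_CK:
  assumes sc: "stone_cech X K e"
    and "continuous_map X euclideanreal h" and "bounded (h ` topspace X)"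
  obtains g where "g \<in> CK K" and "\<And>x. x \<in> topspace X \<Longrightarrow> g (e x) = h x"
proof -
  obtain G where G: "continuous_map K euclideanreal G" "\<And>x. x \<in> topspace X \<Longrightarrow> G (e x) = h x"
    using assms unfolding stone_cech_def by blast
  let ?g = "\<lambda>p. if p \<in> topspace K then G p else 0"
  have "?g \<in> CK K"
    using G(1) by (auto simp: CK_def intro: continuous_map_eq)
  moreover have "?g (e x) = h x" if "x \<in> topspace X" for x
    using that G(2) stone_cech_image_subset_topspace[OF sc] by auto
  ultimately show thesis by (rule that)
qed

lemma CK_uminus: "g \<in> CK K \<Longrightarrow> - g \<in> CK K"
  using continuous_map_minus[of K g] by (simp add: CK_def fun_Compl_def)

lemma CK_bounded:
  assumes "compact_space K" and "g \<in> CK K"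
  obtains B where "\<And>p. \<bar>g p\<bar> \<le> B"
proof -
  have "compactin euclideanreal (g ` topspace K)"
    using assms by (intro image_compactin) (auto simp: compact_space_def CK_def)
  then have "bounded (g ` topspace K)"
    by (simp add: compact_imp_bounded)
  then obtain B where "\<forall>p\<in>topspace K. \<bar>g p\<bar> \<le> B"
    by (auto simp: bounded_iff)
  with assms(2) have "\<bar>g p\<bar> \<le> max B 0" for p
    by (cases "p \<in> topspace K") (auto simp: CK_def)
  then show thesis by (rule that)
qed

definition difference_quotient :: "('a::metric_space \<Rightarrow> real) \<Rightarrow> 'a \<times> 'a \<Rightarrow> real" where
  "difference_quotient f = (\<lambda>(x, y). (f x - f y) / dist x y)"

lemma continuous_on_difference_quotient:
  assumes "continuous_on UNIV f"
  shows "continuous_on Mtilde (difference_quotient f)"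
  unfolding difference_quotient_def case_prod_unfold
  by (intro continuous_intros continuous_on_compose2[OF assms]) (auto simp: Mtilde_def)

lemma lipschitz_difference_quotient_bound:
  assumes L: "L-lipschitz_on UNIV f"
  shows "\<bar>difference_quotient f p\<bar> \<le> L"
proof (cases p)
  case (Pair x y)
  show ?thesis
  proof (cases "x = y")
    case True
    then show ?thesis using Pair lipschitz_on_nonneg[OF L] by (simp add: difference_quotient_def)
  next
    case False
    have "\<bar>f x - f y\<bar> \<le> L * dist x y"
      using lipschitz_onD[OF L, of x y] by (simp add: dist_real_def)
    with False Pair show ?thesis
      by (simp add: difference_quotient_def abs_divide divide_le_eq)
  qed
qed

lemma lipschitz_on_if_difference_quotient_bounded:
  fixes f :: "'a::metric_space \<Rightarrow> real"
  assumes quot: "\<And>x y. x \<noteq> y \<Longrightarrow> dist x y * q x y = f x - f y"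
    and bound: "\<And>x y. \<bar>q x y\<bar> \<le> B"
  shows "B-lipschitz_on UNIV f"
proof (rule lipschitz_onI)
  fix x y :: 'a
  show "dist (f x) (f y) \<le> B * dist x y"
  proof (cases "x = y")
    case False
    have "dist (f x) (f y) = dist x y * \<bar>q x y\<bar>"
      by (simp add: dist_real_def abs_mult flip: quot[OF False])
    also have "\<dots> \<le> B * dist x y"
      using mult_right_mono[OF bound zero_le_dist] by (simp only: mult.commute)
    finally show ?thesis .
  qed simp
next
  show "0 \<le> B"
    using abs_ge_zero bound order_trans by blast
qed

lemma Phi_eqI:
  assumes sc: "stone_cech (top_of_set Mtilde) K e" and "h \<in> CK K"
    and quot: "\<And>x y. x \<noteq> y \<Longrightarrow> h (e (x, y)) = (f x - f y) / dist x y"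
  shows "Phi K e f = h"
  unfolding Phi_def
proof (rule the_equality)
  fix h'
  assume "h' \<in> CK K \<and> (\<forall>x y. x \<noteq> y \<longrightarrow> h' (e (x, y)) = (f x - f y) / dist x y)"
  with assms show "h' = h"
    by (intro stone_cech_CK_eqI[OF sc]) (auto simp: Mtilde_def)
qed (use assms in blast)

lemma lipschitz_Phi:
  fixes f :: "'a::metric_space \<Rightarrow> real"
  assumes sc: "stone_cech (top_of_set Mtilde) K e" and L: "L-lipschitz_on UNIV f"
  shows "Phi K e f \<in> CK K"
    and "\<And>x y. x \<noteq> y \<Longrightarrow> Phi K e f (e (x, y)) = (f x - f y) / dist x y"
proof -
  have "bounded (difference_quotient f ` Mtilde)"
    using lipschitz_difference_quotient_bound[OF L] by (intro boundedI[where B = L]) auto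
  moreover have "continuous_on Mtilde (difference_quotient f)"
    using lipschitz_on_continuous_on[OF L] by (rule continuous_on_difference_quotient)
  ultimately obtain h where h: "h \<in> CK K" "\<And>p. p \<in> Mtilde \<Longrightarrow> h (e p) = difference_quotient f p"
    using stone_cech_extension_CK[OF sc, of "difference_quotient f"] by auto
  then have quot: "h (e (x, y)) = (f x - f y) / dist x y" if "x \<noteq> y" for x y
    using that by (simp add: Mtilde_def difference_quotient_def)
  have "Phi K e f = h"
    using Phi_eqI[OF sc h(1) quot] .
  with h(1) quot show "Phi K e f \<in> CK K"
    and "\<And>x y. x \<noteq> y \<Longrightarrow> Phi K e f (e (x, y)) = (f x - f y) / dist x y"
    by auto
qed

lemma Phi_uminus:
  fixes f :: "'a::metric_space \<Rightarrow> real"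
  assumes sc: "stone_cech (top_of_set Mtilde) K e" and L: "L-lipschitz_on UNIV f"
  shows "Phi K e (- f) = - Phi K e f"
  using lipschitz_Phi[OF sc L]
  by (intro Phi_eqI[OF sc] CK_uminus) (auto simp: fun_Compl_def minus_divide_left)

lemma lipschitz_Phi_in_GG:
  fixes f :: "'a::metric_space \<Rightarrow> real"
  assumes sc: "stone_cech (top_of_set Mtilde) K e" and L: "L-lipschitz_on UNIV f"
  shows "Phi K e f \<in> GG K e"
  using lipschitz_Phi[OF sc L] by (simp add: GG_def)

lemma Phi_Lip0_subset:
  fixes z :: "'a::metric_space"
  assumes sc: "stone_cech (top_of_set Mtilde) K e"
  shows "Phi K e ` Lip0 z \<subseteq> GG K e \<inter> uminus ` GG K e"
proof
  fix g assume "g \<in> Phi K e ` Lip0 z"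
  then obtain f L where g: "g = Phi K e f" and L: "L-lipschitz_on UNIV f"
    by (auto simp: Lip0_def)
  have "g = - Phi K e (- f)"
    using Phi_uminus[OF sc L] g by (simp add: fun_Compl_def)
  moreover have "Phi K e (- f) \<in> GG K e"
    using L by (intro lipschitz_Phi_in_GG[OF sc]) simp
  ultimately have "g \<in> uminus ` GG K e"
    by blast
  with g lipschitz_Phi_in_GG[OF sc L] show "g \<in> GG K e \<inter> uminus ` GG K e"
    by blast
qed

lemma additive_on_distinct_antisym:
  fixes H :: "'a \<Rightarrow> 'a \<Rightarrow> 'b::ab_group_add"
  assumes three: "\<exists>a b c :: 'a. a \<noteq> b \<and> b \<noteq> c \<and> a \<noteq> c"
    and add: "\<And>x u y. x \<noteq> u \<Longrightarrow> u \<noteq> y \<Longrightarrow> x \<noteq> y \<Longrightarrow> H x y = H x u + H u y"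
    and "x \<noteq> y"
  shows "H y x = - H x y"
proof -
  obtain a b c :: 'a where "a \<noteq> b" "b \<noteq> c" "a \<noteq> c"
    using three by blast
  then have "\<exists>w\<in>{a, b, c}. w \<noteq> x \<and> w \<noteq> y"
    by auto
  then obtain w where w: "w \<noteq> x" "w \<noteq> y"
    by blast
  have "H w x = H w y + H y x"
    using w \<open>x \<noteq> y\<close> by (intro add) auto
  also have "H w y = H w x + H x y"
    using w \<open>x \<noteq> y\<close> by (intro add) auto
  finally have "H w x + 0 = H w x + (H x y + H y x)"
    by (simp only: add.assoc add_0_right)
  then have "H x y + H y x = 0"
    by (rule add_left_imp_eq[symmetric])
  then show ?thesis
    by (simp add: eq_neg_iff_add_eq_0 add.commute)
qed

lemma additive_on_distinct_imp_difference:
  fixes H :: "'a \<Rightarrow> 'a \<Rightarrow> 'b::ab_group_add"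
  assumes three: "\<exists>a b c :: 'a. a \<noteq> b \<and> b \<noteq> c \<and> a \<noteq> c"
    and add: "\<And>x u y. x \<noteq> u \<Longrightarrow> u \<noteq> y \<Longrightarrow> x \<noteq> y \<Longrightarrow> H x y = H x u + H u y"
  obtains f where "f z = 0" and "\<And>x y. x \<noteq> y \<Longrightarrow> H x y = f x - f y"
proof -
  let ?f = "\<lambda>x. if x = z then 0 else H x z"
  have "H x y = ?f x - ?f y" if "x \<noteq> y" for x y
  proof -
    have "H z y = - H y z" if "y \<noteq> z"
      using additive_on_distinct_antisym[OF three add that] by simp
    with \<open>x \<noteq> y\<close> add[of x z y] show ?thesis
      by auto
  qed
  then show thesis
    using that[of ?f] by simp
qed

lemma GG_inter_uminus_additive:
  assumes "g \<in> GG K e" and "- g \<in> GG K e" and "x \<noteq> u" "u \<noteq> y" "x \<noteq> y"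
  shows "dist x y * g (e (x, y)) = dist x u * g (e (x, u)) + dist u y * g (e (u, y))"
proof (rule antisym)
  show "dist x y * g (e (x, y)) \<le> dist x u * g (e (x, u)) + dist u y * g (e (u, y))"
    using assms by (simp add: GG_def)
  have "dist x y * - g (e (x, y)) \<le> dist x u * - g (e (x, u)) + dist u y * - g (e (u, y))"
    using assms by (simp add: GG_def fun_Compl_def)
  then show "dist x u * g (e (x, u)) + dist u y * g (e (u, y)) \<le> dist x y * g (e (x, y))"
    by simp
qed

lemma GG_inter_uminus_subset:
  fixes z :: "'a::metric_space"
  assumes three: "\<exists>a b c :: 'a. a \<noteq> b \<and> b \<noteq> c \<and> a \<noteq> c"
    and sc: "stone_cech (top_of_set Mtilde) K e"
  shows "GG K e \<inter> uminus ` GG K e \<subseteq> Phi K e ` Lip0 z"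
proof
  fix g assume "g \<in> GG K e \<inter> uminus ` GG K e"
  then obtain h where "g \<in> GG K e" "h \<in> GG K e" "g = - h"
    by blast
  then have g: "g \<in> GG K e" "- g \<in> GG K e"
    by (auto simp: fun_Compl_def)
  then have gC: "g \<in> CK K"
    by (simp add: GG_def)
  obtain f where f0: "f z = 0"
    and f: "\<And>x y. x \<noteq> y \<Longrightarrow> dist x y * g (e (x, y)) = f x - f y"
    using additive_on_distinct_imp_difference[where H = "\<lambda>x y. dist x y * g (e (x, y))",
        OF three GG_inter_uminus_additive[OF g]] by blast
  obtain B where B: "\<And>p. \<bar>g p\<bar> \<le> B"
    using CK_bounded[OF _ gC] sc by (auto simp: stone_cech_def)
  have "B-lipschitz_on UNIV f"
    using f B by (rule lipschitz_on_if_difference_quotient_bounded[where q = "\<lambda>x y. g (e (x, y))"])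
  then have "f \<in> Lip0 z"
    using f0 by (auto simp: Lip0_def)
  moreover have "Phi K e f = g"
    using f by (intro Phi_eqI[OF sc gC]) (simp add: field_simps)
  ultimately show "g \<in> Phi K e ` Lip0 z"
    by blast
qed

theorem proposition2p8:
  fixes z :: "'a::complete_space" and K :: "'k topology" and e :: "'a \<times> 'a \<Rightarrow> 'k"
  assumes "\<exists>a b c :: 'a. a \<noteq> b \<and> b \<noteq> c \<and> a \<noteq> c"
    and "stone_cech (top_of_set Mtilde) K e"
  shows "GG K e \<inter> uminus ` (GG K e) = Phi K e ` Lip0 z"
  using GG_inter_uminus_subset[OF assms] Phi_Lip0_subset[OF assms(2)] by (rule equalityI)

end
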